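(* Let $M\ge 1$ be an integer, $\Delta x>0$, and consider the cells $C_j=[x_{j-\frac12},x_{j+\frac12}]$ with centers $x_j=j\Delta x$, $j\in\{-M,\dots,M\}$. Let $H:[0,\infty)\to\mathbb{R}$ be differentiable, let $V:\mathbb{R}\to\mathbb{R}$, and let $(W_k)_{k\in\{-2M,\dots,2M\}}$ be real numbers (approximations of the interaction potential $W$). Suppose the cell averages $\overline\rho_j\ge 0$, $j\in\{-M,\dots,M\}$, are given at time $t$, and define: \begin{itemize} \item slopes $(\rho_x)_j\in\mathbb{R}$ and point values $\rho_j^{\rm E}=\overline\rho_j+\frac{\Delta x}{2}(\rho_x)_j$, $\rho_j^{\rm W}=\overline\rho_j-\frac{\Delta x}{2}(\rho_x)_j$, where the slopes are chosen so that $\rho_j^{\rm E}\ge0$ and $\rho_j^{\rm W}\ge0$ for all $j$ (a positivity preserving piecewise linear reconstruction); \item $\xi_j=\Delta x\sum_{i=-M}^{M}W_{j-i}\overline\rho_i+H'(\overline\rho_j)+V(x_j)$; \item $u_{j+\frac12}=-\frac{\xi_{j+1}-\xi_j}{\Delta x}$, $u_{j+\frac12}^+=\max(u_{j+\frac12},0)$, $u_{j+\frac12}^-=\min(u_{j+\frac12},0)$ for $j=-M,\dots,M-1$; \item fluxes $F_{j+\frac12}=u_{j+\frac12}^+\rho_j^{\rm E}+u_{j+\frac12}^-\rho_{j+1}^{\rm W}$ for $j=-M,\dots,M-1$, and $F_{-M-\frac12}=F_{M+\frac12}=0$. \end{itemize} Let $\Delta t>0$ and define the forward Euler update $\overline\rho_j(t+\Delta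 t)=\overline\rho_j-\frac{\Delta t}{\Delta x}\big(F_{j+\frac12}-F_{j-\frac12}\big)$. If \[ \Delta t\le\frac{\Delta x}{2a},\qquad a=\max_{j}\big\{u_{j+\frac12}^+,\,-u_{j+\frac12}^-\big\}, \] then $\overline\rho_j(t+\Delta t)\ge0$ for all $j$. Consequently, starting from nonnegative initial cell averages and choosing every time step according to this CFL condition (computed from the current values), all computed cell averages remain nonnegative.
   Context: This is the one-dimensional semi-discrete finite-volume scheme $\frac{d\overline\rho_j}{dt}=-\frac{F_{j+\frac12}-F_{j-\frac12}}{\Delta x}$ for the equation $\rho_t=\partial_x\big[\rho\,\partial_x\big(H'(\rho)+V(x)+W*\rho\big)\big]$ with $\rho_0\ge0$, discretized in time by the forward Euler method. In the paper the slopes are first taken as centered differences $(\overline\rho_{j+1}-\overline\rho_{j-1})/(2\Delta x)$ and, if a point value becomes negative, recomputed with the generalized minmod limiter; this is one example of a positivity preserving reconstruction. *)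

theory Defs
  imports Complex_Main
begin

text \<open>Hd is the derivative H' of H; W k approximates the interaction potential.\<close>

definition xi :: "int \<Rightarrow> real \<Rightarrow> (int \<Rightarrow> real) \<Rightarrow> (real \<Rightarrow> real) \<Rightarrow> (real \<Rightarrow> real)
    \<Rightarrow> (int \<Rightarrow> real) \<Rightarrow> int \<Rightarrow> real" where
  "xi M dx W Hd V rho j =
     dx * (\<Sum>i\<in>{-M..M}. W (j - i) * rho i) + Hd (rho j) + V (real_of_int j * dx)"

text \<open>u M ... j is u_{j+1/2}.\<close>
definition u :: "int \<Rightarrow> real \<Rightarrow> (int \<Rightarrow> real) \<Rightarrow> (real \<Rightarrow> real) \<Rightarrow> (real \<Rightarrow> real)
    \<Rightarrow> (int \<Rightarrow> real) \<Rightarrow> int \<Rightarrow> real" where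
  "u M dx W Hd V rho j = - (xi M dx W Hd V rho (j + 1) - xi M dx W Hd V rho j) / dx"

definition rhoE :: "real \<Rightarrow> (int \<Rightarrow> real) \<Rightarrow> (int \<Rightarrow> real) \<Rightarrow> int \<Rightarrow> real" where
  "rhoE dx rho s j = rho j + dx / 2 * s j"

definition rhoW :: "real \<Rightarrow> (int \<Rightarrow> real) \<Rightarrow> (int \<Rightarrow> real) \<Rightarrow> int \<Rightarrow> real" where
  "rhoW dx rho s j = rho j - dx / 2 * s j"

text \<open>flux ... j is F_{j+1/2}; it is zero for j = -M-1 and j = M (boundary fluxes).\<close>
definition flux :: "int \<Rightarrow> real \<Rightarrow> (int \<Rightarrow> real) \<Rightarrow> (real \<Rightarrow> real) \<Rightarrow> (real \<Rightarrow> real)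
    \<Rightarrow> (int \<Rightarrow> real) \<Rightarrow> (int \<Rightarrow> real) \<Rightarrow> int \<Rightarrow> real" where
  "flux M dx W Hd V rho s j =
     (if -M \<le> j \<and> j \<le> M - 1 then
        max (u M dx W Hd V rho j) 0 * rhoE dx rho s j
        + min (u M dx W Hd V rho j) 0 * rhoW dx rho s (j + 1)
      else 0)"

definition euler_step :: "int \<Rightarrow> real \<Rightarrow> real \<Rightarrow> (int \<Rightarrow> real) \<Rightarrow> (real \<Rightarrow> real) \<Rightarrow> (real \<Rightarrow> real)
    \<Rightarrow> (int \<Rightarrow> real) \<Rightarrow> (int \<Rightarrow> real) \<Rightarrow> int \<Rightarrow> real" where
  "euler_step M dx dt W Hd V rho s j =
     rho j - dt / dx * (flux M dx W Hd V rho s j - flux M dx W Hd V rho s (j - 1))"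

definition cfl_a :: "int \<Rightarrow> real \<Rightarrow> (int \<Rightarrow> real) \<Rightarrow> (real \<Rightarrow> real) \<Rightarrow> (real \<Rightarrow> real)
    \<Rightarrow> (int \<Rightarrow> real) \<Rightarrow> real" where
  "cfl_a M dx W Hd V rho =
     Max ((\<lambda>j. max (max (u M dx W Hd V rho j) 0) (- min (u M dx W Hd V rho j) 0)) ` {-M..M-1})"

end

theory Submission
  imports Defs
begin

text \<open>Write \<open>\<lambda> = \<Delta>t/\<Delta>x\<close>. Since the cell average \<open>\<rho>\<^sub>j\<close> is the mean of the point values
  \<open>\<rho>\<^sub>j\<^sup>E\<close> and \<open>\<rho>\<^sub>j\<^sup>W\<close>, the update is nonnegative as soon as the outflow \<open>\<lambda> F(j+1/2)\<close> is at
  most \<open>\<rho>\<^sub>j\<^sup>E/2\<close> and the inflow \<open>\<lambda> F(j-1/2)\<close> is at least \<open>-\<rho>\<^sub>j\<^sup>W/2\<close>. The upwind flux moves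
  only \<open>\<rho>\<^sub>j\<^sup>E\<close> out of cell \<open>j\<close> to the right and only \<open>\<rho>\<^sub>j\<^sup>W\<close> out of it to the left, at speeds
  bounded by \<open>a\<close>, so both bounds follow from the CFL condition \<open>\<lambda> a \<le> 1/2\<close>. Neither the
  properties of \<open>H\<close> nor the particular form of the velocities play a role.\<close>

lemma cfl_a_bounds_speeds:
  assumes "k \<in> {-M..M-1}"
  shows "max (u M dx W Hd V rho k) 0 \<le> cfl_a M dx W Hd V rho"
    and "- min (u M dx W Hd V rho k) 0 \<le> cfl_a M dx W Hd V rho"
proof -
  have "max (max (u M dx W Hd V rho k) 0) (- min (u M dx W Hd V rho k) 0)
          \<le> cfl_a M dx W Hd V rho"
    unfolding cfl_a_def using assms by (intro Max_ge) auto
  then show "max (u M dx W Hd V rho k) 0 \<le> cfl_a M dx W Hd V rho"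
    and "- min (u M dx W Hd V rho k) 0 \<le> cfl_a M dx W Hd V rho"
    by linarith+
qed

lemma courant_number_bounds:
  assumes "dx > 0" and "dt \<ge> 0" and "dt * (2 * cfl_a M dx W Hd V rho) \<le> dx"
    and "k \<in> {-M..M-1}"
  shows "dt / dx * max (u M dx W Hd V rho k) 0 \<le> 1 / 2"
    and "dt / dx * - min (u M dx W Hd V rho k) 0 \<le> 1 / 2"
proof -
  have courant: "dt / dx * cfl_a M dx W Hd V rho \<le> 1 / 2"
    using assms(1,3) by (simp add: field_simps)
  have ratio_nonneg: "dt / dx \<ge> 0" using assms(1,2) by simp
  have "dt / dx * max (u M dx W Hd V rho k) 0 \<le> dt / dx * cfl_a M dx W Hd V rho"
    by (rule mult_left_mono[OF cfl_a_bounds_speeds(1)[OF assms(4)] ratio_nonneg])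
  moreover have "dt / dx * - min (u M dx W Hd V rho k) 0 \<le> dt / dx * cfl_a M dx W Hd V rho"
    by (rule mult_left_mono[OF cfl_a_bounds_speeds(2)[OF assms(4)] ratio_nonneg])
  ultimately show "dt / dx * max (u M dx W Hd V rho k) 0 \<le> 1 / 2"
    and "dt / dx * - min (u M dx W Hd V rho k) 0 \<le> 1 / 2"
    using courant by linarith+
qed

lemma scaled_product_le_half:
  fixes c x :: real
  assumes "c \<le> 1 / 2" and "x \<ge> 0"
  shows "c * x \<le> x / 2"
  using mult_right_mono[OF assms] by simp

lemma outflow_le_half_east_value:
  assumes "dx > 0" and "dt \<ge> 0" and "dt * (2 * cfl_a M dx W Hd V rho) \<le> dx"
    and point_values: "\<forall>j\<in>{-M..M}. rhoE dx rho s j \<ge> 0 \<and> rhoW dx rho s j \<ge> 0"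
    and "j \<in> {-M..M}"
  shows "dt / dx * flux M dx W Hd V rho s j \<le> rhoE dx rho s j / 2"
proof (cases "j \<le> M - 1")
  case True
  let ?up = "max (u M dx W Hd V rho j) 0"
  have "flux M dx W Hd V rho s j \<le> ?up * rhoE dx rho s j"
    using True assms(5) point_values by (simp add: flux_def mult_nonpos_nonneg)
  then have "dt / dx * flux M dx W Hd V rho s j \<le> (dt / dx * ?up) * rhoE dx rho s j"
    using assms(1,2) mult_left_mono[of _ _ "dt / dx"] by (simp add: mult.assoc)
  also have "\<dots> \<le> rhoE dx rho s j / 2"
    using courant_number_bounds(1)[OF assms(1-3)] True assms(5) point_values
    by (intro scaled_product_le_half) auto
  finally show ?thesis .
next
  case False
  then show ?thesis using assms(5) point_values by (auto simp: flux_def)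
qed

lemma inflow_ge_minus_half_west_value:
  assumes "dx > 0" and "dt \<ge> 0" and "dt * (2 * cfl_a M dx W Hd V rho) \<le> dx"
    and point_values: "\<forall>j\<in>{-M..M}. rhoE dx rho s j \<ge> 0 \<and> rhoW dx rho s j \<ge> 0"
    and "j \<in> {-M..M}"
  shows "- (rhoW dx rho s j / 2) \<le> dt / dx * flux M dx W Hd V rho s (j - 1)"
proof (cases "-M \<le> j - 1")
  case True
  let ?um = "- min (u M dx W Hd V rho (j - 1)) 0"
  have "- (?um * rhoW dx rho s j) \<le> flux M dx W Hd V rho s (j - 1)"
    using True assms(5) point_values by (simp add: flux_def)
  then have "- ((dt / dx * ?um) * rhoW dx rho s j) \<le> dt / dx * flux M dx W Hd V rho s (j - 1)"
    using assms(1,2) mult_left_mono[of "- (?um * rhoW dx rho s j)" _ "dt / dx"]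
    by (simp add: mult.assoc)
  moreover have "(dt / dx * ?um) * rhoW dx rho s j \<le> rhoW dx rho s j / 2"
    using courant_number_bounds(2)[OF assms(1-3)] True assms(5) point_values
    by (intro scaled_product_le_half) auto
  ultimately show ?thesis by linarith
next
  case False
  then show ?thesis using assms(5) point_values by (auto simp: flux_def)
qed

lemma euler_step_nonneg:
  assumes "dx > 0" and "dt > 0" and "dt * (2 * cfl_a M dx W Hd V rho) \<le> dx"
    and "\<forall>j\<in>{-M..M}. rhoE dx rho s j \<ge> 0 \<and> rhoW dx rho s j \<ge> 0"
    and "j \<in> {-M..M}"
  shows "euler_step M dx dt W Hd V rho s j \<ge> 0"
proof -
  have "euler_step M dx dt W Hd V rho s j
      = (rhoE dx rho s j / 2 - dt / dx * flux M dx W Hd V rho s j)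
        + (rhoW dx rho s j / 2 + dt / dx * flux M dx W Hd V rho s (j - 1))"
    using assms(1) by (simp add: euler_step_def rhoE_def rhoW_def field_simps)
  moreover note outflow_le_half_east_value[OF assms(1) _ assms(3-5)]
    inflow_ge_minus_half_west_value[OF assms(1) _ assms(3-5)]
  ultimately show ?thesis using assms(2) by simp
qed

theorem theorem2p1:
  fixes M :: int and dx :: real and H Hd V :: "real \<Rightarrow> real" and W :: "int \<Rightarrow> real"
  assumes "M \<ge> 1" and "dx > 0"
    and "\<And>r. r \<ge> 0 \<Longrightarrow> (H has_real_derivative Hd r) (at r within {0..})"
  shows
   "(\<forall>(rho :: int \<Rightarrow> real) (s :: int \<Rightarrow> real) (dt :: real).
       (\<forall>j\<in>{-M..M}. rho j \<ge> 0)
     \<and> (\<forall>j\<in>{-M..M}. rhoE dx rho s j \<ge> 0 \<and> rhoW dx rho s j \<ge> 0)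
     \<and> dt > 0
     \<and> dt * (2 * cfl_a M dx W Hd V rho) \<le> dx
     \<longrightarrow> (\<forall>j\<in>{-M..M}. euler_step M dx dt W Hd V rho s j \<ge> 0))
  \<and> (\<forall>(rhos :: nat \<Rightarrow> int \<Rightarrow> real) (ss :: nat \<Rightarrow> int \<Rightarrow> real) (dts :: nat \<Rightarrow> real).
       (\<forall>j\<in>{-M..M}. rhos 0 j \<ge> 0)
     \<and> (\<forall>n. \<forall>j\<in>{-M..M}. rhoE dx (rhos n) (ss n) j \<ge> 0 \<and> rhoW dx (rhos n) (ss n) j \<ge> 0)
     \<and> (\<forall>n. dts n > 0 \<and> dts n * (2 * cfl_a M dx W Hd V (rhos n)) \<le> dx)
     \<and> (\<forall>n. \<forall>j\<in>{-M..M}. rhos (Suc n) j = euler_step M dx (dts n) W Hd V (rhos n) (ss n) j)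
     \<longrightarrow> (\<forall>n. \<forall>j\<in>{-M..M}. rhos n j \<ge> 0))"
proof (intro conjI allI impI ballI)
  fix rho s dt j
  assume "(\<forall>j\<in>{-M..M}. rho j \<ge> 0)
     \<and> (\<forall>j\<in>{-M..M}. rhoE dx rho s j \<ge> 0 \<and> rhoW dx rho s j \<ge> 0)
     \<and> dt > 0 \<and> dt * (2 * cfl_a M dx W Hd V rho) \<le> dx" and "j \<in> {-M..M}"
  then show "euler_step M dx dt W Hd V rho s j \<ge> 0"
    using euler_step_nonneg[OF assms(2)] by blast
next
  fix rhos :: "nat \<Rightarrow> int \<Rightarrow> real" and ss :: "nat \<Rightarrow> int \<Rightarrow> real" and dts :: "nat \<Rightarrow> real"
    and n j
  assume scheme: "(\<forall>j\<in>{-M..M}. rhos 0 j \<ge> 0)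
     \<and> (\<forall>n. \<forall>j\<in>{-M..M}. rhoE dx (rhos n) (ss n) j \<ge> 0 \<and> rhoW dx (rhos n) (ss n) j \<ge> 0)
     \<and> (\<forall>n. dts n > 0 \<and> dts n * (2 * cfl_a M dx W Hd V (rhos n)) \<le> dx)
     \<and> (\<forall>n. \<forall>j\<in>{-M..M}. rhos (Suc n) j = euler_step M dx (dts n) W Hd V (rhos n) (ss n) j)"
    and j: "j \<in> {-M..M}"
  show "rhos n j \<ge> 0"
  proof (cases n)
    case 0
    then show ?thesis using scheme j by blast
  next
    case (Suc m)
    have "euler_step M dx (dts m) W Hd V (rhos m) (ss m) j \<ge> 0"
      using euler_step_nonneg[OF assms(2) _ _ _ j] scheme by blast
    then show ?thesis using scheme j Suc by simp
  qed
qed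

end
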